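(* Let $S \in \mathbb{Z}^{m\times m}$ be a nonsingular Smith form, $T \in \mathbb{Z}^{m\times m}$ a nonsingular matrix in Hermite form, $A \in \mathbb{Z}^{a\times m}$ and $F\in\mathbb{Z}^{f\times m}$ (with $a,f\ge 0$), such that every row of $S$ and of $A$ lies in $\mathcal{L}(T)$. Consider, with column blocks of sizes $f,m,a,m$, $$M = \begin{bmatrix} I_f & F & 0 & 0 \\ 0 & T & 0 & I_m \\ 0 & A & I_a & 0 \\ 0 & S & 0 & 0\end{bmatrix}.$$ Then: (1) The Hermite form of $M$ has the shape $\begin{bmatrix} I_f & G & 0 & Q \\ 0 & T & 0 & X \\ 0 & 0 & I_a & C \\ 0 & 0 & 0 & K\end{bmatrix}$ for some integer blocks $G\in\mathbb{Z}^{f\times m}$, $Q\in\mathbb{Z}^{f\times m}$, $X\in\mathbb{Z}^{m\times m}$, $C \in\mathbb{Z}^{a\times m}$, $K\in\mathbb{Z}^{m\times m}$. (2) $\begin{bmatrix} I_a & C\\ 0 & K\end{bmatrix}$ is the Hermite form of the integer matrix $\begin{bmatrix} I_a & -AT^{-1} \\ 0 & -ST^{-1}\end{bmatrix}$. (3) There is a unimodular matrix of the form $\bar U = \begin{bmatrix} I_f & Q & 0 & Y_2 \\ 0 & I_m & 0 & 0 \\ 0 & C & I_a & Y_3 \\ 0 & K & 0 & Y_4\end{bmatrix}$ (for some integer blocks $Y_2,Y_3,Y_4$, with $G,Q,C,K$ as in (1)) such that $$\bar U M = \begin{bmatrix} I_f & G & 0 & Q \\ 0 & T & 0 & I_m \\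 0 & 0 & I_a & C \\ 0 & 0 & 0 & K\end{bmatrix}.$$
   Context: For an integer matrix $A$, $\mathcal{L}(A)$ denotes the lattice of all $\mathbb{Z}$-linear combinations of the rows of $A$. A nonsingular square integer matrix is in Hermite form if it is upper triangular with positive diagonal entries $h_j$ and each entry above the diagonal in column $j$ lies in $[0,h_j)$; every nonsingular integer matrix $B$ has a unique Hermite form $WB$ with $W$ unimodular. A Smith form is a diagonal matrix $\mathrm{diag}(s_1,\dots,s_m)$ with nonnegative integer entries and $s_i \mid s_{i+1}$; it is nonsingular if all $s_i>0$. *)

theory Defs
  imports "Jordan_Normal_Form.Gauss_Jordan_Elimination" "Jordan_Normal_Form.Determinant"
begin

definition int_lattice :: "int mat \<Rightarrow> int vec set" where
  "int_lattice A = {transpose_mat A *\<^sub>v c | c. c \<in> carrier_vec (dim_row A)}"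

definition is_hermite :: "int mat \<Rightarrow> bool" where
  "is_hermite H \<longleftrightarrow> square_mat H \<and>
     (\<forall>i j. j < i \<and> i < dim_row H \<longrightarrow> H $$ (i,j) = 0) \<and>
     (\<forall>j < dim_row H. H $$ (j,j) > 0) \<and>
     (\<forall>i j. i < j \<and> j < dim_row H \<longrightarrow> 0 \<le> H $$ (i,j) \<and> H $$ (i,j) < H $$ (j,j))"

definition unimodular :: "int mat \<Rightarrow> bool" where
  "unimodular W \<longleftrightarrow> invertible_mat W"

definition hermite_form_of :: "int mat \<Rightarrow> int mat \<Rightarrow> bool" where
  "hermite_form_of H B \<longleftrightarrow> is_hermite H \<and>
     (\<exists>W. W \<in> carrier_mat (dim_row B) (dim_row B) \<and> unimodular W \<and> H = W * B)"

definition nonsingular_smith :: "int mat \<Rightarrow> bool" where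
  "nonsingular_smith S \<longleftrightarrow> square_mat S \<and>
     (\<forall>i j. i < dim_row S \<and> j < dim_row S \<and> i \<noteq> j \<longrightarrow> S $$ (i,j) = 0) \<and>
     (\<forall>i < dim_row S. S $$ (i,i) > 0) \<and>
     (\<forall>i. Suc i < dim_row S \<longrightarrow> S $$ (i,i) dvd S $$ (Suc i, Suc i))"

definition rat_inv :: "int mat \<Rightarrow> rat mat" where
  "rat_inv T = the (mat_inverse (map_mat rat_of_int T))"

(* 2x2 and 4x4 block matrices, rows of blocks given left to right *)
abbreviation blk2 :: "'a mat \<Rightarrow> 'a mat \<Rightarrow> 'a mat \<Rightarrow> 'a mat \<Rightarrow> 'a mat" where
  "blk2 \<equiv> four_block_mat"

definition blk4 :: "'a mat \<Rightarrow> 'a mat \<Rightarrow> 'a mat \<Rightarrow> 'a mat \<Rightarrow>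
                    'a mat \<Rightarrow> 'a mat \<Rightarrow> 'a mat \<Rightarrow> 'a mat \<Rightarrow>
                    'a mat \<Rightarrow> 'a mat \<Rightarrow> 'a mat \<Rightarrow> 'a mat \<Rightarrow>
                    'a mat \<Rightarrow> 'a mat \<Rightarrow> 'a mat \<Rightarrow> 'a mat \<Rightarrow> 'a mat" where
  "blk4 A11 A12 A13 A14 A21 A22 A23 A24 A31 A32 A33 A34 A41 A42 A43 A44 =
     four_block_mat
       (four_block_mat A11 A12 A21 A22) (four_block_mat A13 A14 A23 A24)
       (four_block_mat A31 A32 A41 A42) (four_block_mat A33 A34 A43 A44)"

end

(* The lattice hypotheses give integer matrices P_S, P_A with S = P_S T and A = P_A T, so
   -S T^-1 = -P_S is integral; let K = W0 (-P_S) be its Hermite form.  Adding Z K times the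
   block row (0 T 0 I) of M to another block row changes its second block column by
   Z K T = -Z W0 S, which adding Z W0 times the block row (0 S 0 0) cancels: the net effect
   is Z K in the last block column.  This is what Ubar does, after F has been reduced modulo T
   to G = F + Q0 T: it reduces Q0 and -P_A modulo K and kills A and S.  One more row operation
   reduces the identity block in the last column modulo K, giving the Hermite form (1), whose
   lower right part is the Hermite form (2).  Hermite forms exist by Euclid's algorithm
   applied column by column. *)

theory Submission
  imports Defs
begin

section \<open>Unimodular integer matrices\<close>

lemma unimodular_iff_is_unit_det:
  fixes W :: "int mat"
  assumes W: "W \<in> carrier_mat n n"
  shows "unimodular W \<longleftrightarrow> is_unit (det W)"
proof
  assume "unimodular W"
  then obtain V where WV: "W * V = 1\<^sub>m n" and VW: "V * W = 1\<^sub>m (dim_row V)"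
    using W unfolding unimodular_def invertible_mat_def inverts_mat_def by auto
  have "V \<in> carrier_mat n n"
    using arg_cong[OF WV, of dim_col] arg_cong[OF VW, of dim_col] W by auto
  then have "det W * det V = 1"
    using det_mult[OF W] WV by (metis det_one)
  then show "is_unit (det W)" by (metis dvd_triv_left)
next
  assume "is_unit (det W)"
  then obtain e where e: "det W * e = 1" by (metis dvdE)
  have adj: "adj_mat W \<in> carrier_mat n n" using adj_mat[OF W] by auto
  have scale: "e \<cdot>\<^sub>m (det W \<cdot>\<^sub>m 1\<^sub>m n) = 1\<^sub>m n"
    by (rule eq_matI) (use e in \<open>auto simp: mult.commute\<close>)
  have "W * (e \<cdot>\<^sub>m adj_mat W) = 1\<^sub>m n" "(e \<cdot>\<^sub>m adj_mat W) * W = 1\<^sub>m n"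
    using adj_mat[OF W] scale by (simp_all add: mult_smult_distrib[OF W adj] mult_smult_assoc_mat[OF adj W])
  then show "unimodular W"
    unfolding unimodular_def invertible_mat_def inverts_mat_def
    using W adj by (intro conjI exI[of _ "e \<cdot>\<^sub>m adj_mat W"]) auto
qed

lemma unimodular_one: "unimodular (1\<^sub>m n :: int mat)"
  by (simp add: unimodular_iff_is_unit_det[of _ n])

lemma unimodular_mult:
  fixes V W :: "int mat"
  assumes "V \<in> carrier_mat n n" "W \<in> carrier_mat n n" "unimodular V" "unimodular W"
  shows "unimodular (V * W)"
  using assms by (simp add: unimodular_iff_is_unit_det[of _ n] det_mult[of _ n] abs_mult)

lemma unimodular_four_block_mat_lower_left_zero:
  fixes A D :: "int mat"
  assumes "A \<in> carrier_mat n1 n1" "B \<in> carrier_mat n1 n2" "D \<in> carrier_mat n2 n2"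
    and "unimodular A" "unimodular D"
  shows "unimodular (four_block_mat A B (0\<^sub>m n2 n1) D)"
  using assms by (simp add: unimodular_iff_is_unit_det[of _ "n1 + n2"] unimodular_iff_is_unit_det[of _ n1]
      unimodular_iff_is_unit_det[of _ n2] det_four_block_mat_lower_left_zero[of _ n1 _ n2] abs_mult)

lemma unimodular_four_block_mat_upper_right_zero:
  fixes A D :: "int mat"
  assumes "A \<in> carrier_mat n1 n1" "C \<in> carrier_mat n2 n1" "D \<in> carrier_mat n2 n2"
    and "unimodular A" "unimodular D"
  shows "unimodular (four_block_mat A (0\<^sub>m n1 n2) C D)"
  using assms by (simp add: unimodular_iff_is_unit_det[of _ "n1 + n2"] unimodular_iff_is_unit_det[of _ n1]
      unimodular_iff_is_unit_det[of _ n2] det_four_block_mat_upper_right_zero[of _ n1 _ n2] abs_mult)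

lemma unimodular_addrow_mat: "k \<noteq> l \<Longrightarrow> unimodular (addrow_mat n (a :: int) k l)"
  by (simp add: unimodular_iff_is_unit_det[of _ n] det_addrow_mat)

lemma unimodular_swaprows_mat: "k < n \<Longrightarrow> l < n \<Longrightarrow> k \<noteq> l \<Longrightarrow> unimodular (swaprows_mat n k l :: int mat)"
  by (simp add: unimodular_iff_is_unit_det[of _ n] det_swaprows_mat)

lemma unimodular_multrow_mat: "k < n \<Longrightarrow> is_unit a \<Longrightarrow> unimodular (multrow_mat n k (a :: int))"
  by (simp add: unimodular_iff_is_unit_det[of _ n] det_multrow_mat)

section \<open>Hermite normal form\<close>

definition reduced_modulo :: "int mat \<Rightarrow> int mat \<Rightarrow> bool" where
  "reduced_modulo B D \<longleftrightarrow>
     (\<forall>i<dim_row B. \<forall>j<dim_col B. 0 \<le> B $$ (i, j) \<and> B $$ (i, j) < D $$ (j, j))"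

lemma column_reduction_exists:
  fixes K R :: "int mat"
  assumes K: "K \<in> carrier_mat m m" "upper_triangular K" and R: "R \<in> carrier_mat r m" and c: "c < m"
  shows "\<exists>Z \<in> carrier_mat r m. (\<forall>i<r. \<forall>j<c. (R + Z * K) $$ (i, j) = R $$ (i, j)) \<and>
           (\<forall>i<r. (R + Z * K) $$ (i, c) = R $$ (i, c) mod K $$ (c, c))"
proof
  define Z where "Z = mat r m (\<lambda>(i, l). if l = c then - (R $$ (i, c) div K $$ (c, c)) else 0)"
  show Z: "Z \<in> carrier_mat r m" unfolding Z_def by simp
  have entry: "(R + Z * K) $$ (i, j) = R $$ (i, j) - (R $$ (i, c) div K $$ (c, c)) * K $$ (c, j)"
    if "i < r" "j < m" for i j
  proof -
    have "(Z * K) $$ (i, j) = (\<Sum>l\<in>{0..<m}. (if l = c then - (R $$ (i, c) div K $$ (c, c)) else 0) * K $$ (l, j))"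
      using that Z K by (simp add: scalar_prod_def Z_def)
    also have "\<dots> = - (R $$ (i, c) div K $$ (c, c)) * K $$ (c, j)"
      using c by (simp add: if_distrib[of "\<lambda>x. x * _"] cong: if_cong)
    finally show ?thesis using that R Z K by simp
  qed
  show "(\<forall>i<r. \<forall>j<c. (R + Z * K) $$ (i, j) = R $$ (i, j)) \<and>
      (\<forall>i<r. (R + Z * K) $$ (i, c) = R $$ (i, c) mod K $$ (c, c))"
    using K c by (auto simp: entry minus_div_mult_eq_mod upper_triangularD)
qed

lemma reduced_modulo_exists:
  fixes K P :: "int mat"
  assumes K: "K \<in> carrier_mat m m" "upper_triangular K" "\<forall>j<m. 0 < K $$ (j, j)"
    and P: "P \<in> carrier_mat r m"
  shows "\<exists>Z \<in> carrier_mat r m. reduced_modulo (P + Z * K) K"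
proof -
  have "\<exists>Z \<in> carrier_mat r m. \<forall>i<r. \<forall>j<c. 0 \<le> (P + Z * K) $$ (i, j) \<and> (P + Z * K) $$ (i, j) < K $$ (j, j)"
    if "c \<le> m" for c
    using that
  proof (induction c)
    case 0
    show ?case by (intro bexI[of _ "0\<^sub>m r m"]) auto
  next
    case (Suc c)
    then obtain Z where Z: "Z \<in> carrier_mat r m"
      and prefix: "\<forall>i<r. \<forall>j<c. 0 \<le> (P + Z * K) $$ (i, j) \<and> (P + Z * K) $$ (i, j) < K $$ (j, j)"
      by auto
    have R: "P + Z * K \<in> carrier_mat r m" using P Z K by auto
    obtain Z' where Z': "Z' \<in> carrier_mat r m"
      and keep: "\<forall>i<r. \<forall>j<c. (P + Z * K + Z' * K) $$ (i, j) = (P + Z * K) $$ (i, j)"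
      and new: "\<forall>i<r. (P + Z * K + Z' * K) $$ (i, c) = (P + Z * K) $$ (i, c) mod K $$ (c, c)"
      using column_reduction_exists[OF K(1,2) R, of c] Suc.prems by auto
    have sum: "P + (Z + Z') * K = P + Z * K + Z' * K"
      using P Z Z' K by (simp add: add_mult_distrib_mat assoc_add_mat)
    show ?case
    proof (intro bexI[of _ "Z + Z'"] allI impI)
      fix i j assume i: "i < r" and j: "j < Suc c"
      show "0 \<le> (P + (Z + Z') * K) $$ (i, j) \<and> (P + (Z + Z') * K) $$ (i, j) < K $$ (j, j)"
      proof (cases "j < c")
        case True
        then show ?thesis using prefix keep i unfolding sum by simp
      next
        case False
        then have "j = c" using j by simp
        then show ?thesis using new K(3) Suc.prems i unfolding sum by simp
      qed
    qed (use Z Z' in auto)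
  qed
  then show ?thesis using P K by (force simp: reduced_modulo_def)
qed

lemma is_hermite_imp_upper_triangular: "is_hermite H \<Longrightarrow> upper_triangular H"
  unfolding is_hermite_def by auto

lemma is_hermite_diag_pos: "is_hermite H \<Longrightarrow> j < dim_row H \<Longrightarrow> 0 < H $$ (j, j)"
  unfolding is_hermite_def by auto

lemma is_hermite_one: "is_hermite (1\<^sub>m n)"
  unfolding is_hermite_def by auto

lemma reduced_modulo_exists_hermite:
  assumes "K \<in> carrier_mat m m" "is_hermite K" "P \<in> carrier_mat r m"
  shows "\<exists>Z \<in> carrier_mat r m. reduced_modulo (P + Z * K) K"
  using assms by (intro reduced_modulo_exists) (auto simp: is_hermite_imp_upper_triangular is_hermite_diag_pos)

lemma is_hermite_four_block_mat:
  assumes A: "A \<in> carrier_mat n1 n1" and B: "B \<in> carrier_mat n1 n2" and D: "D \<in> carrier_mat n2 n2"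
    and "is_hermite A" "is_hermite D" "reduced_modulo B D"
  shows "is_hermite (four_block_mat A B (0\<^sub>m n2 n1) D)"
proof -
  have A': "\<And>i j. j < i \<Longrightarrow> i < n1 \<Longrightarrow> A $$ (i, j) = 0" "\<And>j. j < n1 \<Longrightarrow> 0 < A $$ (j, j)"
    "\<And>i j. i < j \<Longrightarrow> j < n1 \<Longrightarrow> 0 \<le> A $$ (i, j) \<and> A $$ (i, j) < A $$ (j, j)"
    using \<open>is_hermite A\<close> A unfolding is_hermite_def by auto
  have D': "\<And>i j. j < i \<Longrightarrow> i < n2 \<Longrightarrow> D $$ (i, j) = 0" "\<And>j. j < n2 \<Longrightarrow> 0 < D $$ (j, j)"
    "\<And>i j. i < j \<Longrightarrow> j < n2 \<Longrightarrow> 0 \<le> D $$ (i, j) \<and> D $$ (i, j) < D $$ (j, j)"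
    using \<open>is_hermite D\<close> D unfolding is_hermite_def by auto
  have B': "\<And>i j. i < n1 \<Longrightarrow> j < n2 \<Longrightarrow> 0 \<le> B $$ (i, j) \<and> B $$ (i, j) < D $$ (j, j)"
    using \<open>reduced_modulo B D\<close> B unfolding reduced_modulo_def by auto
  show ?thesis
    unfolding is_hermite_def
  proof (intro conjI allI impI)
    fix i j assume "j < i \<and> i < dim_row (four_block_mat A B (0\<^sub>m n2 n1) D)"
    then show "four_block_mat A B (0\<^sub>m n2 n1) D $$ (i, j) = 0"
      using A D A'(1)[of j i] D'(1)[of "j - n1" "i - n1"] by auto
  next
    fix j assume "j < dim_row (four_block_mat A B (0\<^sub>m n2 n1) D)"
    then show "0 < four_block_mat A B (0\<^sub>m n2 n1) D $$ (j, j)"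
      using A D A'(2)[of j] D'(2)[of "j - n1"] by auto
  next
    fix i j assume "i < j \<and> j < dim_row (four_block_mat A B (0\<^sub>m n2 n1) D)"
    then show "0 \<le> four_block_mat A B (0\<^sub>m n2 n1) D $$ (i, j)"
      and "four_block_mat A B (0\<^sub>m n2 n1) D $$ (i, j) < four_block_mat A B (0\<^sub>m n2 n1) D $$ (j, j)"
      using A D A'(3)[of i j] D'(3)[of "i - n1" "j - n1"] B'[of i "j - n1"] by auto
  qed (use A D in auto)
qed

lemma hermite_form_of_mult:
  assumes "hermite_form_of H (W * B)" "W \<in> carrier_mat n n" "unimodular W" "B \<in> carrier_mat n k"
  shows "hermite_form_of H B"
proof -
  obtain V where V: "V \<in> carrier_mat n n" "unimodular V" and H: "H = V * (W * B)"
    using assms unfolding hermite_form_of_def by auto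
  have "H = (V * W) * B" using H V assms by simp
  moreover have "is_hermite H" using assms unfolding hermite_form_of_def by simp
  ultimately show ?thesis
    using assms V unfolding hermite_form_of_def by (intro conjI exI[of _ "V * W"]) (auto intro: unimodular_mult)
qed

lemma hermite_form_of_four_block_mat:
  fixes A B D W Z :: "int mat"
  assumes A: "A \<in> carrier_mat n1 n1" and B: "B \<in> carrier_mat n1 n2" and D: "D \<in> carrier_mat n2 n2"
    and W: "W \<in> carrier_mat n2 n2" "unimodular W" and Z: "Z \<in> carrier_mat n1 n2"
    and "is_hermite A" "is_hermite (W * D)" "reduced_modulo (B + Z * (W * D)) (W * D)"
  shows "hermite_form_of (four_block_mat A (B + Z * (W * D)) (0\<^sub>m n2 n1) (W * D))
           (four_block_mat A B (0\<^sub>m n2 n1) D)"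
proof -
  have "four_block_mat (1\<^sub>m n1) (Z * W) (0\<^sub>m n2 n1) W * four_block_mat A B (0\<^sub>m n2 n1) D =
      four_block_mat A (B + Z * (W * D)) (0\<^sub>m n2 n1) (W * D)"
    using A B D W Z by (simp add: mult_four_block_mat[of _ n1 n1 _ n2 _ n2] assoc_mult_mat[of _ n1 n2 _ n2 _ n2])
  then show ?thesis
    unfolding hermite_form_of_def using assms
    by (intro conjI exI[of _ "four_block_mat (1\<^sub>m n1) (Z * W) (0\<^sub>m n2 n1) W"] is_hermite_four_block_mat)
      (auto intro: unimodular_four_block_mat_lower_left_zero unimodular_one)
qed

lemma column_elimination_exists:
  fixes B :: "int mat"
  assumes "B \<in> carrier_mat n k" and p: "p < n" and c: "c < k"
  shows "\<exists>W \<in> carrier_mat n n. unimodular W \<and> 0 \<le> (W * B) $$ (p, c) \<and>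
           (\<forall>i<n. i \<noteq> p \<longrightarrow> (W * B) $$ (i, c) = 0)"
  using assms(1)
  \<comment> \<open>Euclid's algorithm: one step replaces \<open>B(q,c)\<close> by \<open>B(p,c) mod B(q,c)\<close>.\<close>
proof (induction "\<Sum>i\<in>{..<n} - {p}. nat \<bar>B $$ (i, c)\<bar>" arbitrary: B rule: less_induct)
  case less
  show ?case
  proof (cases "\<exists>q<n. q \<noteq> p \<and> B $$ (q, c) \<noteq> 0")
    case False
    define W where "W = multrow_mat n p (if B $$ (p, c) < 0 then -1 else 1 :: int)"
    have "W * B = multrow p (if B $$ (p, c) < 0 then -1 else 1) B"
      unfolding W_def by (rule multrow_mat[OF less.prems, symmetric])
    then show ?thesis
      using False less.prems p c
      by (intro bexI[of _ W]) (auto simp: W_def unimodular_multrow_mat)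
  next
    case True
    then obtain q where q: "q < n" "q \<noteq> p" "B $$ (q, c) \<noteq> 0" by blast
    define a where "a = - (B $$ (p, c) div B $$ (q, c))"
    define E where "E = swaprows_mat n p q * addrow_mat n a p q"
    have E: "E \<in> carrier_mat n n" "unimodular E"
      unfolding E_def using p q
      by (auto intro!: unimodular_mult[of _ n] unimodular_swaprows_mat unimodular_addrow_mat)
    have EB: "E * B = swaprows p q (addrow a p q B)"
      unfolding E_def using less.prems p q
      by (simp add: assoc_mult_mat[of _ n n _ n _ k] addrow_mat[symmetric] swaprows_mat[symmetric])
    have EB_col: "(E * B) $$ (i, c) = (if i = q then B $$ (p, c) mod B $$ (q, c) else B $$ (i, c))"
      if "i < n" "i \<noteq> p" for i
      using that less.prems p q c by (simp add: EB a_def minus_mult_div_eq_mod mult.commute)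
    have "nat \<bar>B $$ (p, c) mod B $$ (q, c)\<bar> < nat \<bar>B $$ (q, c)\<bar>"
      using abs_mod_less[OF q(3)] q(3) by simp
    then have "(\<Sum>i\<in>{..<n} - {p}. nat \<bar>(E * B) $$ (i, c)\<bar>) < (\<Sum>i\<in>{..<n} - {p}. nat \<bar>B $$ (i, c)\<bar>)"
      using q EB_col by (intro sum_strict_mono_ex1 bexI[of _ q]) auto
    then obtain W where W: "W \<in> carrier_mat n n" "unimodular W" and
      WEB: "0 \<le> (W * (E * B)) $$ (p, c)" "\<forall>i<n. i \<noteq> p \<longrightarrow> (W * (E * B)) $$ (i, c) = 0"
      using less.hyps[of "E * B"] E less.prems by auto
    have "W * (E * B) = (W * E) * B" using W E less.prems by simp
    then show ?thesis
      using W E WEB by (intro bexI[of _ "W * E"]) (auto intro: unimodular_mult)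
  qed
qed

lemma hermite_form_exists:
  fixes B :: "int mat"
  assumes "B \<in> carrier_mat n n" "det B \<noteq> 0"
  shows "\<exists>H. hermite_form_of H B"
  using assms
proof (induction n arbitrary: B)
  case 0
  then have "hermite_form_of B B"
    unfolding hermite_form_of_def is_hermite_def by (auto intro!: exI[of _ "1\<^sub>m 0"] unimodular_one)
  then show ?case by blast
next
  case (Suc n)
  obtain W1 where W1: "W1 \<in> carrier_mat (Suc n) (Suc n)" "unimodular W1"
    and pivot: "0 \<le> (W1 * B) $$ (0, 0)" and below: "\<forall>i<Suc n. i \<noteq> 0 \<longrightarrow> (W1 * B) $$ (i, 0) = 0"
    using column_elimination_exists[OF Suc.prems(1), of 0 0] by auto
  obtain x r L B' where split: "split_block (W1 * B) 1 1 = (x, r, L, B')"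
    by (metis prod_cases4)
  have x: "x \<in> carrier_mat 1 1" and r: "r \<in> carrier_mat 1 n" and B': "B' \<in> carrier_mat n n"
    and W1B: "W1 * B = four_block_mat x r L B'"
    using split_block[OF split, of n n] W1 Suc.prems(1) by auto
  have "L = 0\<^sub>m n 1"
    using split below W1(1) Suc.prems(1) unfolding split_block_def Let_def by (auto intro!: eq_matI)
  with W1B have W1B: "W1 * B = four_block_mat x r (0\<^sub>m n 1) B'" by simp
  have "det (W1 * B) \<noteq> 0"
    using W1 Suc.prems unimodular_iff_is_unit_det[OF W1(1)] by (auto simp: det_mult[of _ "Suc n"])
  then have "det x * det B' \<noteq> 0"
    unfolding W1B using x r B' by (simp add: det_four_block_mat_lower_left_zero[of _ 1 _ n])
  then have "0 < x $$ (0, 0)" and det_B': "det B' \<noteq> 0"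
    using pivot W1B x by (auto simp: det_single)
  then have x_hermite: "is_hermite x"
    using x unfolding is_hermite_def by auto
  obtain W' where W': "W' \<in> carrier_mat n n" "unimodular W'" and H': "is_hermite (W' * B')"
    using Suc.IH[OF B' det_B'] B' unfolding hermite_form_of_def by auto
  obtain Y where Y: "Y \<in> carrier_mat 1 n" and red: "reduced_modulo (r + Y * (W' * B')) (W' * B')"
    using reduced_modulo_exists_hermite[OF _ H' r] W' B' by auto
  have "hermite_form_of (four_block_mat x (r + Y * (W' * B')) (0\<^sub>m n 1) (W' * B')) (W1 * B)"
    unfolding W1B using x r B' W' Y x_hermite H' red by (rule hermite_form_of_four_block_mat)
  then show ?case
    using hermite_form_of_mult W1 Suc.prems(1) by blast
qed

lemma det_uminus:
  assumes "B \<in> carrier_mat n n"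
  shows "det (- B) = (- 1) ^ n * det (B :: 'a :: comm_ring_1 mat)"
proof -
  have "- B = (- 1) \<cdot>\<^sub>m B" using assms by (intro eq_matI) auto
  then show ?thesis using assms by simp
qed

lemma nonsingular_smith_det_nonzero:
  assumes "S \<in> carrier_mat m m" "nonsingular_smith S"
  shows "det S \<noteq> 0"
proof -
  have "upper_triangular S" "\<forall>i<m. S $$ (i, i) \<noteq> 0"
    using assms unfolding nonsingular_smith_def by auto
  then show ?thesis
    using assms(1) by (auto simp: det_upper_triangular prod_list_zero_iff diag_mat_def)
qed

lemma int_lattice_factor:
  assumes T: "T \<in> carrier_mat m m" and B: "B \<in> carrier_mat r m"
    and rows: "\<forall>i<r. row B i \<in> int_lattice T"
  shows "\<exists>P \<in> carrier_mat r m. B = P * T"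
proof -
  have "\<forall>i<r. \<exists>v. v \<in> carrier_vec m \<and> row B i = transpose_mat T *\<^sub>v v"
    using rows T unfolding int_lattice_def by auto
  then obtain c where c: "\<And>i. i < r \<Longrightarrow> c i \<in> carrier_vec m \<and> row B i = transpose_mat T *\<^sub>v c i"
    by metis
  define P where "P = mat r m (\<lambda>(i, j). c i $ j)"
  have "B = P * T"
  proof (rule eq_matI)
    fix i j assume "i < dim_row (P * T)" "j < dim_col (P * T)"
    then have ij: "i < r" "j < m" using T unfolding P_def by auto
    have "B $$ (i, j) = (transpose_mat T *\<^sub>v c i) $ j" using c[OF ij(1)] B ij by (metis carrier_matD index_row(1))
    also have "\<dots> = (P * T) $$ (i, j)"
      using c[OF ij(1)] T ij by (auto simp: P_def scalar_prod_def mult.commute intro!: sum.cong)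
    finally show "B $$ (i, j) = (P * T) $$ (i, j)" .
  qed (use B T in \<open>auto simp: P_def\<close>)
  then show ?thesis unfolding P_def by auto
qed

lemma rat_inv_cancel:
  assumes T: "T \<in> carrier_mat m m" "det T \<noteq> 0" and P: "P \<in> carrier_mat r m"
  shows "map_mat rat_of_int (P * T) * rat_inv T = map_mat rat_of_int P"
proof -
  let ?T = "map_mat rat_of_int T"
  have "?T \<in> Units (ring_mat TYPE(rat) m undefined)"
    using T by (intro det_non_zero_imp_unit) (auto simp: of_int_hom.hom_det)
  then obtain Ti where Ti: "mat_inverse ?T = Some Ti"
    using mat_inverse(1)[of ?T m] T by fastforce
  then have "?T * Ti = 1\<^sub>m m" "Ti \<in> carrier_mat m m" "rat_inv T = Ti"
    using mat_inverse(2)[of ?T m] T unfolding rat_inv_def by auto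
  then show ?thesis
    using P T by (simp add: of_int_hom.mat_hom_mult[of _ r m _ m] assoc_mult_mat[of _ r m _ m _ m])
qed

lemma map_mat_rat_of_int_quotient_blocks:
  assumes T: "T \<in> carrier_mat m m" "det T \<noteq> 0"
    and PA: "PA \<in> carrier_mat a m" and PS: "PS \<in> carrier_mat m m"
  shows "map_mat rat_of_int (four_block_mat (1\<^sub>m a) (- PA) (0\<^sub>m m a) (- PS)) =
    four_block_mat (1\<^sub>m a) (- (map_mat rat_of_int (PA * T) * rat_inv T))
      (0\<^sub>m m a) (- (map_mat rat_of_int (PS * T) * rat_inv T))"
  using PA PS by (auto simp: rat_inv_cancel[OF T] map_four_block_mat[of _ a a _ m _ m] intro!: eq_matI)

section \<open>The block matrices\<close>

lemma blk4_carrier_mat: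
  "A11 \<in> carrier_mat r1 c1 \<Longrightarrow> A22 \<in> carrier_mat r2 c2 \<Longrightarrow> A33 \<in> carrier_mat r3 c3 \<Longrightarrow>
   A44 \<in> carrier_mat r4 c4 \<Longrightarrow> blk4 A11 A12 A13 A14 A21 A22 A23 A24 A31 A32 A33 A34 A41 A42 A43 A44
     \<in> carrier_mat (r1 + r2 + (r3 + r4)) (c1 + c2 + (c3 + c4))"
  unfolding blk4_def by simp

lemma blk4_mult:
  fixes A11 :: "'a :: comm_ring_1 mat"
  assumes a: "A11 \<in> carrier_mat da da" "A12 \<in> carrier_mat da db" "A13 \<in> carrier_mat da dc" "A14 \<in> carrier_mat da dd"
    "A21 \<in> carrier_mat db da" "A22 \<in> carrier_mat db db" "A23 \<in> carrier_mat db dc" "A24 \<in> carrier_mat db dd"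
    "A31 \<in> carrier_mat dc da" "A32 \<in> carrier_mat dc db" "A33 \<in> carrier_mat dc dc" "A34 \<in> carrier_mat dc dd"
    "A41 \<in> carrier_mat dd da" "A42 \<in> carrier_mat dd db" "A43 \<in> carrier_mat dd dc" "A44 \<in> carrier_mat dd dd"
  and b: "B11 \<in> carrier_mat da ea" "B12 \<in> carrier_mat da eb" "B13 \<in> carrier_mat da ec" "B14 \<in> carrier_mat da ed"
    "B21 \<in> carrier_mat db ea" "B22 \<in> carrier_mat db eb" "B23 \<in> carrier_mat db ec" "B24 \<in> carrier_mat db ed"
    "B31 \<in> carrier_mat dc ea" "B32 \<in> carrier_mat dc eb" "B33 \<in> carrier_mat dc ec" "B34 \<in> carrier_mat dc ed"
    "B41 \<in> carrier_mat dd ea" "B42 \<in> carrier_mat dd eb" "B43 \<in> carrier_mat dd ec" "B44 \<in> carrier_mat dd ed"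
  shows "blk4 A11 A12 A13 A14 A21 A22 A23 A24 A31 A32 A33 A34 A41 A42 A43 A44 *
         blk4 B11 B12 B13 B14 B21 B22 B23 B24 B31 B32 B33 B34 B41 B42 B43 B44 =
    blk4 (A11 * B11 + A12 * B21 + A13 * B31 + A14 * B41) (A11 * B12 + A12 * B22 + A13 * B32 + A14 * B42)
         (A11 * B13 + A12 * B23 + A13 * B33 + A14 * B43) (A11 * B14 + A12 * B24 + A13 * B34 + A14 * B44)
         (A21 * B11 + A22 * B21 + A23 * B31 + A24 * B41) (A21 * B12 + A22 * B22 + A23 * B32 + A24 * B42)
         (A21 * B13 + A22 * B23 + A23 * B33 + A24 * B43) (A21 * B14 + A22 * B24 + A23 * B34 + A24 * B44)
         (A31 * B11 + A32 * B21 + A33 * B31 + A34 * B41) (A31 * B12 + A32 * B22 + A33 * B32 + A34 * B42)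
         (A31 * B13 + A32 * B23 + A33 * B33 + A34 * B43) (A31 * B14 + A32 * B24 + A33 * B34 + A34 * B44)
         (A41 * B11 + A42 * B21 + A43 * B31 + A44 * B41) (A41 * B12 + A42 * B22 + A43 * B32 + A44 * B42)
         (A41 * B13 + A42 * B23 + A43 * B33 + A44 * B43) (A41 * B14 + A42 * B24 + A43 * B34 + A44 * B44)"
proof -
  note fb = four_block_carrier_mat
  note prod = mult_four_block_mat[OF a(1,2,5,6) b(1,2,5,6)] mult_four_block_mat[OF a(3,4,7,8) b(9,10,13,14)]
    mult_four_block_mat[OF a(1,2,5,6) b(3,4,7,8)] mult_four_block_mat[OF a(3,4,7,8) b(11,12,15,16)]
    mult_four_block_mat[OF a(9,10,13,14) b(1,2,5,6)] mult_four_block_mat[OF a(11,12,15,16) b(9,10,13,14)]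
    mult_four_block_mat[OF a(9,10,13,14) b(3,4,7,8)] mult_four_block_mat[OF a(11,12,15,16) b(11,12,15,16)]
  have sum: "four_block_mat (X1 + Y1) (X2 + Y2) (X3 + Y3) (X4 + Y4) + four_block_mat (U1 + V1) (U2 + V2) (U3 + V3) (U4 + V4)
    = four_block_mat (X1 + Y1 + U1 + V1) (X2 + Y2 + U2 + V2) (X3 + Y3 + U3 + V3) (X4 + Y4 + U4 + V4)"
    if "X1 \<in> carrier_mat r1 c1" "Y1 \<in> carrier_mat r1 c1" "U1 \<in> carrier_mat r1 c1" "V1 \<in> carrier_mat r1 c1"
       "X2 \<in> carrier_mat r1 c2" "Y2 \<in> carrier_mat r1 c2" "U2 \<in> carrier_mat r1 c2" "V2 \<in> carrier_mat r1 c2"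
       "X3 \<in> carrier_mat r2 c1" "Y3 \<in> carrier_mat r2 c1" "U3 \<in> carrier_mat r2 c1" "V3 \<in> carrier_mat r2 c1"
       "X4 \<in> carrier_mat r2 c2" "Y4 \<in> carrier_mat r2 c2" "U4 \<in> carrier_mat r2 c2" "V4 \<in> carrier_mat r2 c2"
     for X1 Y1 U1 V1 X2 Y2 U2 V2 X3 Y3 U3 V3 X4 Y4 U4 V4 :: "'a mat" and r1 r2 c1 c2
    using that by (subst add_four_block_mat[of _ r1 c1 _ c2 _ r2]) (auto simp: assoc_add_mat)
  show ?thesis
    unfolding blk4_def
    by (subst mult_four_block_mat[OF fb[OF a(1,6)] fb[OF a(3,8)] fb[OF a(9,14)] fb[OF a(11,16)]
          fb[OF b(1,6)] fb[OF b(3,8)] fb[OF b(9,14)] fb[OF b(11,16)]], unfold prod)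
       (intro cong_four_block_mat sum mult_carrier_mat; rule a b)
qed

lemma is_hermite_blk4:
  fixes G Q T X C K :: "int mat"
  assumes G: "G \<in> carrier_mat f m" and T: "T \<in> carrier_mat m m" and Q: "Q \<in> carrier_mat f k"
    and X: "X \<in> carrier_mat m k" and C: "C \<in> carrier_mat a k" and K: "K \<in> carrier_mat k k"
    and "is_hermite T" "is_hermite K" "reduced_modulo G T"
    and "reduced_modulo Q K" "reduced_modulo X K" "reduced_modulo C K"
  shows "is_hermite (blk4 (1\<^sub>m f) G (0\<^sub>m f a) Q
                          (0\<^sub>m m f) T (0\<^sub>m m a) X
                          (0\<^sub>m a f) (0\<^sub>m a m) (1\<^sub>m a) C
                          (0\<^sub>m k f) (0\<^sub>m k m) (0\<^sub>m k a) K)"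
proof -
  have "reduced_modulo (four_block_mat (0\<^sub>m f a) Q (0\<^sub>m m a) X) (four_block_mat (1\<^sub>m a) C (0\<^sub>m k a) K)"
    using assms unfolding reduced_modulo_def by auto
  then show ?thesis
    unfolding blk4_def four_block_zero_mat
    using assms by (intro is_hermite_four_block_mat[of _ "f + m" _ "a + k"] is_hermite_four_block_mat[of _ f _ m]
        is_hermite_four_block_mat[of _ a _ k] is_hermite_one) auto
qed

lemma hermite_form_of_blk4:
  fixes G T Q X C K Z :: "int mat"
  assumes G: "G \<in> carrier_mat f m" and T: "T \<in> carrier_mat m m" and Q: "Q \<in> carrier_mat f k"
    and X: "X \<in> carrier_mat m k" and C: "C \<in> carrier_mat a k" and K: "K \<in> carrier_mat k k"
    and Z: "Z \<in> carrier_mat m k"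
    and "is_hermite T" "is_hermite K" "reduced_modulo G T" "reduced_modulo Q K"
    and "reduced_modulo (X + Z * K) K" "reduced_modulo C K"
  shows "hermite_form_of (blk4 (1\<^sub>m f) G (0\<^sub>m f a) Q
                               (0\<^sub>m m f) T (0\<^sub>m m a) (X + Z * K)
                               (0\<^sub>m a f) (0\<^sub>m a m) (1\<^sub>m a) C
                               (0\<^sub>m k f) (0\<^sub>m k m) (0\<^sub>m k a) K)
           (blk4 (1\<^sub>m f) G (0\<^sub>m f a) Q
                 (0\<^sub>m m f) T (0\<^sub>m m a) X
                 (0\<^sub>m a f) (0\<^sub>m a m) (1\<^sub>m a) C
                 (0\<^sub>m k f) (0\<^sub>m k m) (0\<^sub>m k a) K)"
proof -
  let ?D = "blk4 (1\<^sub>m f) (0\<^sub>m f m) (0\<^sub>m f a) (0\<^sub>m f k)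
                 (0\<^sub>m m f) (1\<^sub>m m) (0\<^sub>m m a) Z
                 (0\<^sub>m a f) (0\<^sub>m a m) (1\<^sub>m a) (0\<^sub>m a k)
                 (0\<^sub>m k f) (0\<^sub>m k m) (0\<^sub>m k a) (1\<^sub>m k)"
  have D: "?D \<in> carrier_mat (f + m + (a + k)) (f + m + (a + k))" "unimodular ?D"
    unfolding blk4_def four_block_zero_mat four_block_one_mat using Z
    by (auto intro!: unimodular_four_block_mat_lower_left_zero unimodular_one)
  have "?D * blk4 (1\<^sub>m f) G (0\<^sub>m f a) Q
                  (0\<^sub>m m f) T (0\<^sub>m m a) X
                  (0\<^sub>m a f) (0\<^sub>m a m) (1\<^sub>m a) C
                  (0\<^sub>m k f) (0\<^sub>m k m) (0\<^sub>m k a) K =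
        blk4 (1\<^sub>m f) G (0\<^sub>m f a) Q
             (0\<^sub>m m f) T (0\<^sub>m m a) (X + Z * K)
             (0\<^sub>m a f) (0\<^sub>m a m) (1\<^sub>m a) C
             (0\<^sub>m k f) (0\<^sub>m k m) (0\<^sub>m k a) K"
    by (subst blk4_mult[where da = f and db = m and dc = a and dd = k and
          ea = f and eb = m and ec = a and ed = k]) (use assms in simp_all)
  moreover have "is_hermite (blk4 (1\<^sub>m f) G (0\<^sub>m f a) Q
                                 (0\<^sub>m m f) T (0\<^sub>m m a) (X + Z * K)
                                 (0\<^sub>m a f) (0\<^sub>m a m) (1\<^sub>m a) C
                                 (0\<^sub>m k f) (0\<^sub>m k m) (0\<^sub>m k a) K)"
    using assms by (intro is_hermite_blk4) auto
  ultimately show ?thesis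
    unfolding hermite_form_of_def using D T K by (intro conjI exI[of _ ?D]) (auto simp: blk4_def)
qed

lemma reduction_mult_cancel:
  fixes P Y W N T S :: "int mat"
  assumes P: "P \<in> carrier_mat r m" and Y: "Y \<in> carrier_mat r m" and W: "W \<in> carrier_mat m m"
    and N: "N \<in> carrier_mat m m" and T: "T \<in> carrier_mat m n" and S: "S \<in> carrier_mat m n"
    and NT: "N * T = - S"
  shows "(P + Y * (W * N)) * T + Y * W * S = P * T"
proof -
  have "(P + Y * (W * N)) * T = P * T + Y * W * (N * T)"
    using P Y W N T
    by (simp add: add_mult_distrib_mat[of _ r m] assoc_mult_mat[of _ r m _ m _ n] assoc_mult_mat[of _ m m _ m _ n])
  then have "(P + Y * (W * N)) * T = P * T + - (Y * W * S)"
    using Y W S unfolding NT by simp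
  moreover have "P * T \<in> carrier_mat r n" "Y * W * S \<in> carrier_mat r n"
    using P Y W T S by auto
  ultimately show ?thesis by simp
qed

lemma unimodular_Ubar:
  fixes Q Y2 C Y3 K Y4 :: "int mat"
  assumes Q: "Q \<in> carrier_mat n1 n2" and Y2: "Y2 \<in> carrier_mat n1 n4" and C: "C \<in> carrier_mat n3 n2"
    and Y3: "Y3 \<in> carrier_mat n3 n4" and K: "K \<in> carrier_mat n4 n2" and Y4: "Y4 \<in> carrier_mat n4 n4"
    and "unimodular Y4"
  shows "unimodular (blk4 (1\<^sub>m n1) Q (0\<^sub>m n1 n3) Y2
                          (0\<^sub>m n2 n1) (1\<^sub>m n2) (0\<^sub>m n2 n3) (0\<^sub>m n2 n4)
                          (0\<^sub>m n3 n1) C (1\<^sub>m n3) Y3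
                          (0\<^sub>m n4 n1) K (0\<^sub>m n4 n3) Y4)"
proof -
  let ?E = "blk4 (1\<^sub>m n1) Q (0\<^sub>m n1 n3) (0\<^sub>m n1 n4)
                 (0\<^sub>m n2 n1) (1\<^sub>m n2) (0\<^sub>m n2 n3) (0\<^sub>m n2 n4)
                 (0\<^sub>m n3 n1) C (1\<^sub>m n3) (0\<^sub>m n3 n4)
                 (0\<^sub>m n4 n1) K (0\<^sub>m n4 n3) (1\<^sub>m n4)"
  let ?V = "blk4 (1\<^sub>m n1) (0\<^sub>m n1 n2) (0\<^sub>m n1 n3) Y2
                 (0\<^sub>m n2 n1) (1\<^sub>m n2) (0\<^sub>m n2 n3) (0\<^sub>m n2 n4)
                 (0\<^sub>m n3 n1) (0\<^sub>m n3 n2) (1\<^sub>m n3) Y3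
                 (0\<^sub>m n4 n1) (0\<^sub>m n4 n2) (0\<^sub>m n4 n3) Y4"
  have E: "?E \<in> carrier_mat (n1 + n2 + (n3 + n4)) (n1 + n2 + (n3 + n4))" "unimodular ?E"
    unfolding blk4_def four_block_zero_mat four_block_one_mat using Q C K
    by (auto intro!: unimodular_four_block_mat_upper_right_zero unimodular_four_block_mat_lower_left_zero
        unimodular_one)
  have V: "?V \<in> carrier_mat (n1 + n2 + (n3 + n4)) (n1 + n2 + (n3 + n4))" "unimodular ?V"
    unfolding blk4_def four_block_zero_mat four_block_one_mat using Y2 Y3 Y4 \<open>unimodular Y4\<close>
    by (auto intro!: unimodular_four_block_mat_lower_left_zero unimodular_one)
  have "?E * ?V = blk4 (1\<^sub>m n1) Q (0\<^sub>m n1 n3) Y2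
                       (0\<^sub>m n2 n1) (1\<^sub>m n2) (0\<^sub>m n2 n3) (0\<^sub>m n2 n4)
                       (0\<^sub>m n3 n1) C (1\<^sub>m n3) Y3
                       (0\<^sub>m n4 n1) K (0\<^sub>m n4 n3) Y4"
    by (subst blk4_mult[where da = n1 and db = n2 and dc = n3 and dd = n4 and
          ea = n1 and eb = n2 and ec = n3 and ed = n4]) (use assms in simp_all)
  then show ?thesis
    using E V unimodular_mult by metis
qed

lemma Ubar_mult_M:
  fixes F T A S NA NS W0 Q0 Z1 Z :: "int mat"
  assumes F: "F \<in> carrier_mat f m" and T: "T \<in> carrier_mat m m" and A: "A \<in> carrier_mat a m"
    and S: "S \<in> carrier_mat m m" and NA: "NA \<in> carrier_mat a m" and NS: "NS \<in> carrier_mat m m"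
    and W0: "W0 \<in> carrier_mat m m" and Q0: "Q0 \<in> carrier_mat f m" and Z1: "Z1 \<in> carrier_mat f m"
    and Z: "Z \<in> carrier_mat a m" and NAT: "NA * T = - A" and NST: "NS * T = - S"
  defines "K \<equiv> W0 * NS" and "G \<equiv> F + Q0 * T" and "Q \<equiv> Q0 + Z1 * (W0 * NS)"
    and "C \<equiv> NA + Z * (W0 * NS)"
  shows "blk4 (1\<^sub>m f) Q (0\<^sub>m f a) (Z1 * W0)
              (0\<^sub>m m f) (1\<^sub>m m) (0\<^sub>m m a) (0\<^sub>m m m)
              (0\<^sub>m a f) C (1\<^sub>m a) (Z * W0)
              (0\<^sub>m m f) K (0\<^sub>m m a) W0 *
         blk4 (1\<^sub>m f) F (0\<^sub>m f a) (0\<^sub>m f m)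
              (0\<^sub>m m f) T (0\<^sub>m m a) (1\<^sub>m m)
              (0\<^sub>m a f) A (1\<^sub>m a) (0\<^sub>m a m)
              (0\<^sub>m m f) S (0\<^sub>m m a) (0\<^sub>m m m) =
         blk4 (1\<^sub>m f) G (0\<^sub>m f a) Q
              (0\<^sub>m m f) T (0\<^sub>m m a) (1\<^sub>m m)
              (0\<^sub>m a f) (0\<^sub>m a m) (1\<^sub>m a) C
              (0\<^sub>m m f) (0\<^sub>m m m) (0\<^sub>m m a) K"
proof -
  have K: "K \<in> carrier_mat m m" and Q: "Q \<in> carrier_mat f m" and C: "C \<in> carrier_mat a m"
    unfolding K_def Q_def C_def using W0 NS Q0 Z1 NA Z by auto
  have "1\<^sub>m f * F + Q * T + 0\<^sub>m f a * A + Z1 * W0 * S = F + ((Q0 + Z1 * (W0 * NS)) * T + Z1 * W0 * S)"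
    using F Q T A Z1 W0 S unfolding Q_def K_def by simp
  also have "\<dots> = G"
    unfolding G_def by (simp add: reduction_mult_cancel[OF Q0 Z1 W0 NS T S NST])
  finally have row1: "1\<^sub>m f * F + Q * T + 0\<^sub>m f a * A + Z1 * W0 * S = G" .
  have "0\<^sub>m a f * F + C * T + 1\<^sub>m a * A + Z * W0 * S = ((NA + Z * (W0 * NS)) * T + Z * W0 * S) + A"
    unfolding C_def[symmetric] using F C T A Z W0 S by (intro eq_matI) auto
  also have "\<dots> = 0\<^sub>m a m"
    using A by (simp add: reduction_mult_cancel[OF NA Z W0 NS T S NST] NAT)
  finally have row3: "0\<^sub>m a f * F + C * T + 1\<^sub>m a * A + Z * W0 * S = 0\<^sub>m a m" .
  have "0\<^sub>m m f * F + K * T + 0\<^sub>m m a * A + W0 * S = (0\<^sub>m m m + 1\<^sub>m m * (W0 * NS)) * T + 1\<^sub>m m * W0 * S"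
    using F K T A W0 S unfolding K_def by simp
  also have "\<dots> = 0\<^sub>m m m"
    using T by (simp add: reduction_mult_cancel[OF zero_carrier_mat one_carrier_mat W0 NS T S NST])
  finally have row4: "0\<^sub>m m f * F + K * T + 0\<^sub>m m a * A + W0 * S = 0\<^sub>m m m" .
  show ?thesis
    by (subst blk4_mult[where da = f and db = m and dc = a and dd = m and
          ea = f and eb = m and ec = a and ed = m], unfold row1 row3 row4)
      (use F T A S Q C K Z1 W0 Z in simp_all)
qed

theorem mainTheorem13:
  fixes S T A F :: "int mat" and m a f :: nat
  assumes S: "S \<in> carrier_mat m m" and Ssm: "nonsingular_smith S"
    and T: "T \<in> carrier_mat m m" and Th: "is_hermite T"
    and A: "A \<in> carrier_mat a m" and F: "F \<in> carrier_mat f m"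
    and Srows: "\<forall>i < m. row S i \<in> int_lattice T"
    and Arows: "\<forall>i < a. row A i \<in> int_lattice T"
  defines "M \<equiv> blk4 (1\<^sub>m f) F (0\<^sub>m f a) (0\<^sub>m f m)
                    (0\<^sub>m m f) T (0\<^sub>m m a) (1\<^sub>m m)
                    (0\<^sub>m a f) A (1\<^sub>m a) (0\<^sub>m a m)
                    (0\<^sub>m m f) S (0\<^sub>m m a) (0\<^sub>m m m)"
  shows "\<exists>G Q X C K.
     G \<in> carrier_mat f m \<and> Q \<in> carrier_mat f m \<and> X \<in> carrier_mat m m \<and>
     C \<in> carrier_mat a m \<and> K \<in> carrier_mat m m \<and>
     hermite_form_of
       (blk4 (1\<^sub>m f) G (0\<^sub>m f a) Q
             (0\<^sub>m m f) T (0\<^sub>m m a) X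
             (0\<^sub>m a f) (0\<^sub>m a m) (1\<^sub>m a) C
             (0\<^sub>m m f) (0\<^sub>m m m) (0\<^sub>m m a) K) M \<and>
     (\<exists>N. N \<in> carrier_mat (a + m) (a + m) \<and>
        map_mat rat_of_int N =
          blk2 (1\<^sub>m a) (- (map_mat rat_of_int A * rat_inv T))
               (0\<^sub>m m a) (- (map_mat rat_of_int S * rat_inv T)) \<and>
        hermite_form_of (blk2 (1\<^sub>m a) C (0\<^sub>m m a) K) N) \<and>
     (\<exists>Y2 Y3 Y4 Ubar.
        Y2 \<in> carrier_mat f m \<and> Y3 \<in> carrier_mat a m \<and> Y4 \<in> carrier_mat m m \<and>
        Ubar = blk4 (1\<^sub>m f) Q (0\<^sub>m f a) Y2
                    (0\<^sub>m m f) (1\<^sub>m m) (0\<^sub>m m a) (0\<^sub>m m m)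
                    (0\<^sub>m a f) C (1\<^sub>m a) Y3
                    (0\<^sub>m m f) K (0\<^sub>m m a) Y4 \<and>
        unimodular Ubar \<and>
        Ubar * M = blk4 (1\<^sub>m f) G (0\<^sub>m f a) Q
                        (0\<^sub>m m f) T (0\<^sub>m m a) (1\<^sub>m m)
                        (0\<^sub>m a f) (0\<^sub>m a m) (1\<^sub>m a) C
                        (0\<^sub>m m f) (0\<^sub>m m m) (0\<^sub>m m a) K)"
proof -
  obtain PS PA where PS: "PS \<in> carrier_mat m m" "S = PS * T" and PA: "PA \<in> carrier_mat a m" "A = PA * T"
    using int_lattice_factor[OF T S Srows] int_lattice_factor[OF T A Arows] by blast
  define NS NA where "NS = - PS" and "NA = - PA"
  have NS: "NS \<in> carrier_mat m m" "NS * T = - S" and NA: "NA \<in> carrier_mat a m" "NA * T = - A"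
    unfolding NS_def NA_def using PS PA T by auto
  have det: "det NS \<noteq> 0" "det T \<noteq> 0"
    using nonsingular_smith_det_nonzero[OF S Ssm] PS by (auto simp: NS_def det_mult[OF PS(1) T] det_uminus)
  obtain W0 where W0: "W0 \<in> carrier_mat m m" "unimodular W0" and KH: "is_hermite (W0 * NS)"
    using hermite_form_exists[OF NS(1) det(1)] NS(1) unfolding hermite_form_of_def by auto
  define K where "K = W0 * NS"
  have K: "K \<in> carrier_mat m m" using W0 NS by (simp add: K_def)
  obtain Q0 where Q0: "Q0 \<in> carrier_mat f m" "reduced_modulo (F + Q0 * T) T"
    using reduced_modulo_exists_hermite[OF T Th F] by blast
  obtain Z1 Z Z2 where Z1: "Z1 \<in> carrier_mat f m" "reduced_modulo (Q0 + Z1 * K) K"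
    and Z: "Z \<in> carrier_mat a m" "reduced_modulo (NA + Z * K) K"
    and Z2: "Z2 \<in> carrier_mat m m" "reduced_modulo (1\<^sub>m m + Z2 * K) K"
    using reduced_modulo_exists_hermite[OF K KH[folded K_def]] Q0(1) NA(1) by (meson one_carrier_mat)
  have carriers: "F + Q0 * T \<in> carrier_mat f m" "Q0 + Z1 * K \<in> carrier_mat f m"
    "NA + Z * K \<in> carrier_mat a m" "1\<^sub>m m + Z2 * K \<in> carrier_mat m m"
    "Z1 * W0 \<in> carrier_mat f m" "Z * W0 \<in> carrier_mat a m"
    "four_block_mat (1\<^sub>m a) NA (0\<^sub>m m a) NS \<in> carrier_mat (a + m) (a + m)"
    using F T Q0 Z1 Z Z2 NA NS K W0 by auto
  have M: "M \<in> carrier_mat (f + m + (a + m)) (f + m + (a + m))"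
    unfolding M_def using T by (intro blk4_carrier_mat) auto
  note UM = Ubar_mult_M[OF F T A S NA(1) NS(1) W0(1) Q0(1) Z1(1) Z(1) NA(2) NS(2), folded K_def M_def]
  note U = unimodular_Ubar[OF carriers(2,5,3,6) K W0]
  note part1 = hermite_form_of_mult[OF hermite_form_of_blk4[OF carriers(1) T carriers(2) one_carrier_mat
        carriers(3) K Z2(1) Th KH[folded K_def] Q0(2) Z1(2) Z2(2) Z(2), folded UM]
        blk4_carrier_mat[OF one_carrier_mat one_carrier_mat one_carrier_mat W0(1)] U M]
  note part2 = hermite_form_of_four_block_mat[OF one_carrier_mat NA(1) NS(1) W0 Z(1) is_hermite_one KH
        Z(2)[unfolded K_def], folded K_def]
  note quot = map_mat_rat_of_int_quotient_blocks[OF T det(2) PA(1) PS(1), folded NA_def NS_def PA(2) PS(2)]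
  show ?thesis
    using carriers K part1 quot part2 W0(1) UM U
    by (metis (no_types, lifting))
qed

end
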